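(* Let $q$ be an odd prime power with characteristic $p$, and let \[ h(t)=\frac{(t-2)(t^{q^2-1}-1)}{(t^{q-1}-1)(t^q-t^{q-1}-1)}\in\mathbb F_p(t). \] Then \[ h(t)=t^{(q-1)^2}+\sum_{\substack{\alpha,\beta\ge 0\\ \beta\le q-2\\ 0<\alpha+\beta\le q-1}}\Bigl[2^{\alpha+\beta}\binom{2(q-1)-\alpha-\beta}{q-1}-\binom{\alpha+\beta}{\alpha}\Bigr]t^{(q-1)^2-(\alpha+\beta q)}, \] with integer coefficients interpreted in $\mathbb F_p$ (in particular $h(t)\in\mathbb F_p[t]$).
   Context: For integers $m\ge 0$ and $k$, $\binom mk$ is the usual binomial coefficient, equal to $0$ unless $0\le k\le m$. *)

theory Defs
  imports "HOL-Computational_Algebra.Polynomial" "HOL-Computational_Algebra.Fraction_Field"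
begin

end

(*
  Modulo p the coefficient C(2(q-1)-\<alpha>-\<beta>, q-1) vanishes unless \<alpha>+\<beta> = q-1, since for
  q \<le> n < 2q-1 it is the coefficient of X^(q-1) in (1+X)^n = (1+X^q)(1+X)^(n-q); together
  with 2^(q-1) = 1 the coefficient becomes [\<alpha>+\<beta> = q-1] - C(\<alpha>+\<beta>, \<alpha>).  In w = 1/t both
  parts are geometric sums: the diagonal gives the powers w^((q-1)(b+1)), b < q-1, and by the
  binomial theorem the binomial part is, up to the two excluded pairs, the sum of (w+w^q)^m over
  m < q, which Frobenius evaluates as (w^q + w^(q^2) - 1)/(w + w^q - 1).  What remains is a
  rational identity in t, y = t^(q-1) and z = t^(q^2-1) that holds with y and z independent.
  Nothing uses that t is transcendental, so the computation is done for any admissible t in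
  a field of characteristic p and then specialised to the indeterminate.
*)

theory Submission
  imports "HOL-Number_Theory.Residues" Defs "HOL-Computational_Algebra.Polynomial_Factorial"
begin

lemma odd_prime_power_ge_3:
  fixes p :: nat
  assumes "prime p" "odd p" "k > 0"
  shows "p ^ k \<ge> 3"
proof -
  have "p \<ge> 3"
    using prime_ge_2_nat[OF assms(1)] assms(2) by (cases "p = 2") auto
  moreover have "p \<le> p ^ k"
    using assms(3) prime_gt_0_nat[OF assms(1)] by (simp add: self_le_power)
  ultimately show ?thesis by simp
qed

lemma CHAR_eq_prime_card:
  assumes "prime (card (UNIV :: 'a::{field,finite} set))"
  shows "CHAR('a) = card (UNIV :: 'a set)"
proof -
  have "prime CHAR('a)"
    by (rule prime_CHAR_semidom) (simp add: finite_imp_CHAR_pos)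
  with CHAR_dvd_CARD[where 'a = 'a] assms show ?thesis
    by (simp add: primes_dvd_imp_eq)
qed

lemma of_nat_choose_pred_prime_power_eq_0:
  fixes n q :: nat
  assumes "prime CHAR('a::comm_ring_1)" "q = CHAR('a) ^ k" "q \<le> n" "n < 2 * q - 1"
  shows "of_nat (n choose (q - 1)) = (0 :: 'a)"
proof -
  have "q > 0" using assms(1,2) by (simp add: prime_gt_0_nat)
  define P :: "'a poly" where "P = [:1, 1:] ^ (n - q)"
  have "[:1, 1:] ^ n = ([:1, 1:] ^ q * P :: 'a poly)"
    unfolding P_def using assms(3) by (simp flip: power_add)
  also have "([:1, 1:] :: 'a poly) ^ q = (1 + [:0, 1:]) ^ q"
    by (simp add: one_pCons)
  also have "\<dots> = 1 + monom 1 q"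
    using assms(1,2) by (simp add: freshmans_dream' monom_altdef)
  finally have "coeff ([:1, 1:] ^ n) (q - 1) = coeff P (q - 1) + coeff (monom 1 q * P) (q - 1)"
    by (simp add: distrib_right)
  moreover have "coeff P (q - 1) = 0"
    unfolding P_def by (rule coeff_eq_0) (use assms(3,4) in \<open>auto simp: degree_linear_power\<close>)
  moreover have "coeff (monom 1 q * P) (q - 1) = 0"
    using \<open>q > 0\<close> by (simp add: coeff_monom_mult)
  ultimately show ?thesis
    using assms(3) by (simp add: coeff_linear_poly_power)
qed

lemma two_power_pred_prime_power_eq_1:
  assumes "prime CHAR('a::field)" "odd CHAR('a)" "q = CHAR('a) ^ k"
  shows "(2 :: 'a) ^ (q - 1) = 1"
proof -
  have "(2 :: 'a) \<noteq> 0"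
  proof
    assume "(2 :: 'a) = 0"
    then have "CHAR('a) dvd 2"
      by (metis of_nat_eq_0_iff_char_dvd of_nat_numeral)
    then have "CHAR('a) \<le> 2"
      by (rule dvd_imp_le) simp
    with prime_ge_2_nat[OF assms(1)] have "CHAR('a) = 2"
      by linarith
    with assms(2) show False
      by simp
  qed
  have "q > 0" using assms(1,3) by (simp add: prime_gt_0_nat)
  have "(2 :: 'a) ^ q = 1 ^ q + 1 ^ q"
    using freshmans_dream'[OF assms(1,3), of 1 1] by simp
  moreover have "(2 :: 'a) ^ q = 2 * 2 ^ (q - 1)"
    using \<open>q > 0\<close> by (metis Suc_diff_1 power_Suc)
  ultimately have "2 * 2 ^ (q - 1) = (2 :: 'a) * 1"
    by simp
  with \<open>(2 :: 'a) \<noteq> 0\<close> show ?thesis by simp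
qed

definition exponent_pairs :: "nat \<Rightarrow> (nat \<times> nat) set" where
  "exponent_pairs q = {(\<alpha>, \<beta>). \<beta> \<le> q - 2 \<and> 0 < \<alpha> + \<beta> \<and> \<alpha> + \<beta> \<le> q - 1}"

lemma finite_exponent_pairs [simp]: "finite (exponent_pairs q)"
  by (rule finite_subset[of _ "{..q} \<times> {..q}"]) (auto simp: exponent_pairs_def)

lemma exponent_pairs_le:
  assumes "(a, b) \<in> exponent_pairs q"
  shows "a + b * q \<le> (q - 1)^2"
proof -
  have "a + b * q \<le> (q - 1) * (b + 1)"
    using assms by (cases q) (auto simp: exponent_pairs_def algebra_simps)
  also have "\<dots> \<le> (q - 1) * (q - 1)"
    using assms by (intro mult_le_mono2) (auto simp: exponent_pairs_def)
  finally show ?thesis by (simp add: power2_eq_square)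
qed

lemma sum_exponent_pairs_diagonal:
  fixes w :: "'a::comm_ring_1"
  assumes "q \<ge> 2"
  shows "(\<Sum>(a, b)\<in>exponent_pairs q. (if a + b = q - 1 then 1 else 0) * w ^ (a + b * q))
       = (\<Sum>b<q - 1. (w ^ (q - 1)) ^ (b + 1))"
proof -
  have "(\<Sum>(a, b)\<in>exponent_pairs q. (if a + b = q - 1 then 1 else 0) * w ^ (a + b * q))
      = (\<Sum>x\<in>exponent_pairs q. if fst x + snd x = q - 1 then w ^ (fst x + snd x * q) else 0)"
    by (rule sum.cong) auto
  also have "\<dots> = (\<Sum>(a, b)\<in>{x\<in>exponent_pairs q. fst x + snd x = q - 1}. w ^ (a + b * q))"
    by (simp add: sum.inter_filter case_prod_unfold)
  also have "{x\<in>exponent_pairs q. fst x + snd x = q - 1} = (\<lambda>b. (q - 1 - b, b)) ` {..<q - 1}"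
    using assms by (auto simp: exponent_pairs_def image_iff)
  also have "(\<Sum>(a, b)\<in>(\<lambda>b. (q - 1 - b, b)) ` {..<q - 1}. w ^ (a + b * q))
      = (\<Sum>b<q - 1. w ^ (q - 1 - b + b * q))"
    by (subst sum.reindex) (auto simp: inj_on_def)
  also have "\<dots> = (\<Sum>b<q - 1. (w ^ (q - 1)) ^ (b + 1))"
  proof (rule sum.cong [OF refl])
    fix b assume "b \<in> {..<q - 1}"
    then have "q - 1 - b + b * q = (q - 1) * (b + 1)"
      by (cases q) (auto simp: algebra_simps)
    then show "w ^ (q - 1 - b + b * q) = (w ^ (q - 1)) ^ (b + 1)"
      by (simp only: power_mult)
  qed
  finally show ?thesis .
qed

lemma sum_exponent_pairs_binomial:
  fixes w :: "'a::comm_ring_1"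
  assumes "q \<ge> 2"
  shows "(\<Sum>(a, b)\<in>exponent_pairs q. of_nat ((a + b) choose a) * w ^ (a + b * q))
       = (\<Sum>m<q. (w + w ^ q) ^ m) - 1 - w ^ (q * (q - 1))"
proof -
  let ?f = "\<lambda>(a, b). of_nat ((a + b) choose a) * w ^ (a + b * q)"
  have "(\<Sum>m<q. (w + w ^ q) ^ m) = (\<Sum>m<q. \<Sum>a\<le>m. of_nat (m choose a) * w ^ a * (w ^ q) ^ (m - a))"
    by (simp add: binomial_ring)
  also have "\<dots> = (\<Sum>(m, a)\<in>Sigma {..<q} atMost. of_nat (m choose a) * w ^ a * (w ^ q) ^ (m - a))"
    by (rule sum.Sigma) auto
  also have "\<dots> = sum ?f {(a, b). a + b \<le> q - 1}"
    by (rule sum.reindex_bij_witness[where i="\<lambda>(a, b). (a + b, a)" and j="\<lambda>(m, a). (a, m - a)"])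
       (use assms in \<open>auto simp: power_add ac_simps simp flip: power_mult\<close>)
  also have "{(a, b). a + b \<le> q - 1} = insert (0, 0) (insert (0, q - 1) (exponent_pairs q))"
    using assms by (auto simp: exponent_pairs_def)
  also have "sum ?f \<dots> = 1 + (w ^ (q * (q - 1)) + sum ?f (exponent_pairs q))"
  proof -
    have "(0, 0) \<notin> exponent_pairs q" "(0, q - 1) \<notin> exponent_pairs q"
      using assms by (auto simp: exponent_pairs_def)
    then show ?thesis
      using assms by (simp add: mult.commute)
  qed
  finally show ?thesis by (simp add: algebra_simps)
qed

lemma exponent_pairs_coefficient:
  assumes "prime CHAR('a::field)" "odd CHAR('a)" "q = CHAR('a) ^ k"
    and "(a, b) \<in> exponent_pairs q"
  shows "of_int (2 ^ (a + b) * int ((2 * (q - 1) - a - b) choose (q - 1)) - int ((a + b) choose a))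
       = (if a + b = q - 1 then 1 else 0) - (of_nat ((a + b) choose a) :: 'a)"
proof (cases "a + b = q - 1")
  case True
  then show ?thesis
    using two_power_pred_prime_power_eq_1[OF assms(1-3)] by simp
next
  case False
  have "of_nat ((2 * (q - 1) - a - b) choose (q - 1)) = (0 :: 'a)"
    by (rule of_nat_choose_pred_prime_power_eq_0[OF assms(1,3)])
       (use assms(4) False in \<open>auto simp: exponent_pairs_def\<close>)
  with False show ?thesis by simp
qed

lemma sum_exponent_pairs_expansion:
  fixes x :: "'a::field"
  assumes "prime CHAR('a)" "odd CHAR('a)" "q = CHAR('a) ^ k" "q \<ge> 2" "x \<noteq> 0"
  shows "(\<Sum>(\<alpha>, \<beta>)\<in>exponent_pairs q.
            of_int (2 ^ (\<alpha> + \<beta>) * int ((2 * (q - 1) - \<alpha> - \<beta>) choose (q - 1))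
                    - int ((\<alpha> + \<beta>) choose \<alpha>)) * x ^ ((q - 1)^2 - (\<alpha> + \<beta> * q)))
       = x ^ ((q - 1)^2) * ((\<Sum>b<q - 1. (inverse x ^ (q - 1)) ^ (b + 1))
           - ((\<Sum>m<q. (inverse x + inverse x ^ q) ^ m) - 1 - inverse x ^ (q * (q - 1))))"
proof -
  let ?w = "inverse x" and ?E = "(q - 1)^2"
  have summand: "of_int (2 ^ (a + b) * int ((2 * (q - 1) - a - b) choose (q - 1)) - int ((a + b) choose a))
        * x ^ (?E - (a + b * q))
      = x ^ ?E * (((if a + b = q - 1 then 1 else 0) - of_nat ((a + b) choose a)) * ?w ^ (a + b * q))"
    if "(a, b) \<in> exponent_pairs q" for a b
  proof -
    have "x ^ (?E - (a + b * q)) = x ^ ?E * ?w ^ (a + b * q)"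
      using exponent_pairs_le[OF that] \<open>x \<noteq> 0\<close> by (simp add: power_diff_conv_inverse)
    then show ?thesis
      unfolding exponent_pairs_coefficient[OF assms(1-3) that] by (simp add: mult_ac)
  qed
  have "(\<Sum>(\<alpha>, \<beta>)\<in>exponent_pairs q.
            of_int (2 ^ (\<alpha> + \<beta>) * int ((2 * (q - 1) - \<alpha> - \<beta>) choose (q - 1))
                    - int ((\<alpha> + \<beta>) choose \<alpha>)) * x ^ (?E - (\<alpha> + \<beta> * q)))
      = x ^ ?E * (\<Sum>(a, b)\<in>exponent_pairs q.
          ((if a + b = q - 1 then 1 else 0) - of_nat ((a + b) choose a)) * ?w ^ (a + b * q))"
    unfolding sum_distrib_left by (intro sum.cong refl) (auto simp only: summand split: prod.splits)
  also have "\<dots> = x ^ ?E * ((\<Sum>b<q - 1. (?w ^ (q - 1)) ^ (b + 1))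
           - ((\<Sum>m<q. (?w + ?w ^ q) ^ m) - 1 - ?w ^ (q * (q - 1))))"
    using sum_exponent_pairs_diagonal[of q ?w] sum_exponent_pairs_binomial[of q ?w] \<open>q \<ge> 2\<close>
    by (simp add: left_diff_distrib sum_subtractf case_prod_unfold)
  finally show ?thesis .
qed

lemma geometric_sum_shifted:
  fixes u y :: "'a::comm_ring_1"
  assumes "u * y = 1"
  shows "(y - 1) * (\<Sum>b<n. u ^ (b + 1)) = 1 - u ^ n"
proof -
  have "(y - 1) * (\<Sum>b<n. u ^ (b + 1)) = (y * u - u) * (\<Sum>b<n. u ^ b)"
    by (simp add: sum_distrib_left algebra_simps)
  also have "\<dots> = 1 - u ^ n"
    using assms by (simp add: one_diff_power_eq mult.commute)
  finally show ?thesis .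
qed

lemma geometric_sum_frobenius:
  fixes w :: "'a::comm_ring_1"
  assumes "prime CHAR('a)" "q = CHAR('a) ^ k"
  shows "(w + w ^ q - 1) * (\<Sum>m<q. (w + w ^ q) ^ m) = w ^ q + (w ^ q) ^ q - 1"
  using power_diff_1_eq[of "w + w ^ q" q] freshmans_dream'[OF assms] by simp

(* y and z stand for t^(q-1) and t^(q^2-1), A and G for the two geometric sums,
   which enter only through the linear equations they satisfy. *)
lemma rational_identity:
  fixes x y z A G :: "'a::field"
  assumes "y \<noteq> 0" "z \<noteq> 0" "y \<noteq> 1" "x * y - y - 1 \<noteq> 0"
    and A: "(y - 1) * A = 1 - y^2 / z"
    and G: "(x * y - y - 1) * G = x * y - 1 - y / z"
  shows "(x - 2) * (z - 1) / ((y - 1) * (x * y - y - 1)) = z / y^2 * (1 + A - (G - 1 - y / z))"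
proof -
  define D where "D = (y - 1) * (x * y - y - 1)"
  have "D \<noteq> 0" using assms(3,4) by (simp add: D_def)
  have "z * D * (1 + A - (G - 1 - y / z))
      = (2 * z + y) * D + (x * y - y - 1) * (z * ((y - 1) * A))
        - (y - 1) * (z * ((x * y - y - 1) * G))"
    using \<open>z \<noteq> 0\<close> by (simp add: D_def algebra_simps)
  also have "\<dots> = (x - 2) * (z - 1) * y^2"
    unfolding A G D_def using \<open>z \<noteq> 0\<close> by (simp add: algebra_simps power2_eq_square)
  finally show ?thesis using \<open>D \<noteq> 0\<close> \<open>y \<noteq> 0\<close>
    unfolding D_def[symmetric] by (simp add: field_simps)
qed

lemma frobenius_sum_identity:
  fixes x y z :: "'a::field"
  assumes "prime CHAR('a)" "q = CHAR('a) ^ k"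
    and "x \<noteq> 0" "y \<noteq> 0" "z \<noteq> 0" "x ^ q = x * y" "x ^ (q * q) = x * z"
  shows "(x * y - y - 1) * (\<Sum>m<q. (inverse x + inverse x ^ q) ^ m) = x * y - 1 - y / z"
proof -
  define S where "S = (\<Sum>m<q. (inverse x + inverse x ^ q) ^ m)"
  have wq: "inverse x ^ q = inverse (x * y)"
    using assms(6) by (simp add: power_inverse)
  have wqq: "(inverse x ^ q) ^ q = inverse (x * z)"
    using assms(7) by (simp add: power_inverse flip: power_mult)
  have "(x * y - y - 1) * S = - (x * y) * ((inverse x + inverse x ^ q - 1) * S)"
    using assms(3,4) by (simp add: assms(6) field_simps)
  also have "(inverse x + inverse x ^ q - 1) * S = inverse (x * y) + inverse (x * z) - 1"
    unfolding S_def geometric_sum_frobenius[OF assms(1,2)] by (simp only: wqq) (simp only: wq)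
  also have "- (x * y) * (inverse (x * y) + inverse (x * z) - 1) = x * y - 1 - y / z"
    using assms(3-5) by (simp add: field_simps)
  finally show ?thesis
    unfolding S_def .
qed

lemma rational_function_expansion:
  fixes x :: "'a::field"
  assumes "prime CHAR('a)" "odd CHAR('a)" "q = CHAR('a) ^ k" "k > 0"
    and "x \<noteq> 0" "x ^ (q - 1) \<noteq> 1" "x ^ q - x ^ (q - 1) - 1 \<noteq> 0"
  shows "(x - 2) * (x ^ (q^2 - 1) - 1) / ((x ^ (q - 1) - 1) * (x ^ q - x ^ (q - 1) - 1))
       = x ^ ((q - 1)^2)
         + (\<Sum>(\<alpha>, \<beta>)\<in>exponent_pairs q.
              of_int (2 ^ (\<alpha> + \<beta>) * int ((2 * (q - 1) - \<alpha> - \<beta>) choose (q - 1))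
                      - int ((\<alpha> + \<beta>) choose \<alpha>)) * x ^ ((q - 1)^2 - (\<alpha> + \<beta> * q)))"
    (is "_ = _ + ?S")
proof -
  have "q \<ge> 3"
    using odd_prime_power_ge_3[OF assms(1,2,4)] assms(3) by simp
  define w where "w = inverse x"
  define y where "y = x ^ (q - 1)"
  define z where "z = x ^ (q^2 - 1)"
  define A where "A = (\<Sum>b<q - 1. (w ^ (q - 1)) ^ (b + 1))"
  define G where "G = (\<Sum>m<q. (w + w ^ q) ^ m)"
  have "y \<noteq> 0" "z \<noteq> 0" using \<open>x \<noteq> 0\<close> by (simp_all add: y_def z_def)
  have xq: "x ^ q = x * y" and "x ^ (q * q) = x * z"
    using \<open>q \<ge> 3\<close> by (simp_all add: y_def z_def power2_eq_square flip: power_Suc)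
  then have "(x * y - y - 1) * G = x * y - 1 - y / z"
    unfolding G_def w_def using \<open>x \<noteq> 0\<close> \<open>y \<noteq> 0\<close> \<open>z \<noteq> 0\<close>
    by (intro frobenius_sum_identity[OF assms(1,3)])
  have exps: "(q - 1) * (q - 1) + (q - 1) * 2 = q^2 - 1" "q * (q - 1) + (q - 1) = q^2 - 1"
    using \<open>q \<ge> 3\<close> by (cases q; simp add: power2_eq_square algebra_simps)+
  then have y_pow: "y ^ (q - 1) * y ^ 2 = z" and "x ^ ((q - 1)^2) * y ^ 2 = z"
    unfolding y_def z_def by (metis power_mult power_add power2_eq_square)+
  moreover have "x ^ (q * (q - 1)) * y = z"
    using exps(2) unfolding y_def z_def by (metis power_add)
  ultimately have xE: "x ^ ((q - 1)^2) = z / y ^ 2" and wE: "w ^ (q * (q - 1)) = y / z"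
    using \<open>x \<noteq> 0\<close> \<open>y \<noteq> 0\<close> \<open>z \<noteq> 0\<close> by (auto simp: w_def field_simps)
  have "(y - 1) * A = 1 - (w ^ (q - 1)) ^ (q - 1)"
    unfolding A_def using \<open>x \<noteq> 0\<close>
    by (intro geometric_sum_shifted) (simp add: w_def y_def flip: power_mult_distrib)
  also have "(w ^ (q - 1)) ^ (q - 1) = y ^ 2 / z"
    using y_pow \<open>x \<noteq> 0\<close> \<open>y \<noteq> 0\<close> \<open>z \<noteq> 0\<close>
    by (simp add: w_def y_def field_simps flip: power_mult)
  finally have "(y - 1) * A = 1 - y^2 / z" .
  have "x ^ ((q - 1)^2) + ?S = x ^ ((q - 1)^2) + x ^ ((q - 1)^2) * (A - (G - 1 - w ^ (q * (q - 1))))"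
    using sum_exponent_pairs_expansion[OF assms(1-3) _ assms(5)] \<open>q \<ge> 3\<close>
    by (simp add: A_def G_def w_def)
  also have "\<dots> = z / y ^ 2 * (1 + A - (G - 1 - y / z))"
    by (simp only: xE wE right_diff_distrib distrib_left mult_1_right add_diff_eq)
  also have "\<dots> = (x - 2) * (z - 1) / ((y - 1) * (x * y - y - 1))"
    using assms(6,7) xq \<open>y \<noteq> 0\<close> \<open>z \<noteq> 0\<close> \<open>(y - 1) * A = 1 - y^2 / z\<close>
      \<open>(x * y - y - 1) * G = x * y - 1 - y / z\<close>
    by (intro rational_identity[symmetric]) (simp_all add: y_def)
  finally show ?thesis
    by (simp add: xq y_def z_def)
qed

lemma CHAR_fract [simp]: "CHAR('a::idom fract) = CHAR('a)"
  by (rule CHAR_eqI) (auto simp: of_nat_fract Zero_fract_def eq_fract of_nat_eq_0_iff_char_dvd)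

lemma to_fract_power [simp]: "to_fract (x ^ n) = to_fract x ^ n"
  by (induction n) simp_all

lemma to_fract_of_nat [simp]: "to_fract (of_nat n) = of_nat n"
  by (simp add: to_fract_def Fract_of_nat_eq)

lemma to_fract_numeral [simp]: "to_fract (numeral n) = numeral n"
  using to_fract_of_nat[of "numeral n"] by simp

lemma to_fract_of_int [simp]: "to_fract (of_int z) = of_int z"
  by (cases z rule: int_diff_cases) simp

lemma to_fract_monom: "to_fract (monom c n) = to_fract [:c:] * to_fract [:0, 1:] ^ n"
proof -
  have "monom c n = [:c:] * [:0, 1:] ^ n"
    by (simp add: monom_altdef)
  then show ?thesis
    by (simp only: to_fract_mult to_fract_power)
qed

lemma to_fract_X_pow_pred_neq_1:
  assumes "n > 1"
  shows "to_fract ([:0, 1:] :: 'a::idom poly) ^ (n - 1) \<noteq> 1"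
proof -
  have "monom 1 (n - 1) \<noteq> (1 :: 'a poly)"
    using assms by (simp add: monom_eq_1_iff)
  then show ?thesis
    by (metis to_fract_monom pCons_one to_fract_1 mult_1 to_fract_eq_iff)
qed

lemma to_fract_X_denominator_neq_0:
  assumes "n > 1"
  shows "to_fract ([:0, 1:] :: 'a::idom poly) ^ n - to_fract [:0, 1:] ^ (n - 1) - 1 \<noteq> 0"
proof -
  have "coeff (monom 1 n - monom 1 (n - 1) - 1 :: 'a poly) 0 \<noteq> 0"
    using assms by simp
  then have "monom 1 n - monom 1 (n - 1) - 1 \<noteq> (0 :: 'a poly)"
    by (metis coeff_0)
  then show ?thesis
    by (metis to_fract_monom pCons_one to_fract_1 mult_1 to_fract_diff to_fract_eq_0_iff)
qed

theorem lemma2p3: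
  fixes p k q :: nat
  assumes "prime p" and "odd p" and "k > 0" and "q = p ^ k"
    and "card (UNIV :: 'a::{field,finite} set) = p"
  shows "(Fract ([:-2, 1:] * (monom 1 (q^2 - 1) - 1)) 1
           / Fract ((monom 1 (q - 1) - 1) * (monom 1 q - monom 1 (q - 1) - 1)) 1
           :: 'a poly fract)
         = Fract (monom 1 ((q - 1)^2)
             + (\<Sum>(\<alpha>, \<beta>) \<in> {(\<alpha>, \<beta>). \<beta> \<le> q - 2 \<and> 0 < \<alpha> + \<beta> \<and> \<alpha> + \<beta> \<le> q - 1}.
                  monom (of_int (2 ^ (\<alpha> + \<beta>) * int ((2 * (q - 1) - \<alpha> - \<beta>) choose (q - 1))
                                 - int ((\<alpha> + \<beta>) choose \<alpha>)))
                        ((q - 1)^2 - (\<alpha> + \<beta> * q)))) 1"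
proof -
  define t :: "'a poly fract" where "t = to_fract [:0, 1:]"
  have "CHAR('a poly fract) = p"
    using CHAR_eq_prime_card[where 'a = 'a] assms(1,5) by simp
  then have char: "prime CHAR('a poly fract)" "odd CHAR('a poly fract)" "q = CHAR('a poly fract) ^ k"
    using assms(1,2,4) by simp_all
  have "q > 1"
    using odd_prime_power_ge_3[OF assms(1-3)] assms(4) by simp
  then have "t \<noteq> 0" "t ^ (q - 1) \<noteq> 1" "t ^ q - t ^ (q - 1) - 1 \<noteq> 0"
    using to_fract_X_pow_pred_neq_1 to_fract_X_denominator_neq_0 by (simp_all add: t_def)
  note expansion = rational_function_expansion[OF char assms(3) this]
  have "[:-2, 1:] = [:0, 1:] - (2 :: 'a poly)"
    by (simp add: numeral_poly)
  then have "to_fract [:-2, 1:] = t - 2"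
    by (simp add: t_def)
  moreover have "to_fract (monom 1 n) = t ^ n" "to_fract (monom (of_int z) n) = of_int z * t ^ n"
    for n z
    by (simp_all add: to_fract_monom t_def pCons_one flip: of_int_poly)
  ultimately show ?thesis
    using expansion unfolding exponent_pairs_def
    by (simp only: to_fract_def[symmetric] to_fract_mult to_fract_diff to_fract_add to_fract_1
        to_fract_sum prod.case_distrib)
qed

end
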